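(* Let $\epsilon'$ be obtained from $\epsilon$ by removing the entry $\epsilon_i$ (if $n=4$, assume $\epsilon'$ homogeneous), and let $\mathcal V'=\mathfrak{tr}^\epsilon_{\epsilon'}(\mathcal V)$. Then (1) $\mathcal V'$ is stable under the action of $\mathring{\mathcal U}(\epsilon')$ via $\phi$ and is isomorphic to the natural representation of $\mathring{\mathcal U}(\epsilon')$; (2) $\mathfrak{tr}^\epsilon_{\epsilon'}(\mathcal V^{\otimes\ell})$ is isomorphic to $\mathcal V'^{\otimes\ell}$ as a $\mathring{\mathcal U}(\epsilon')$-module, for every $\ell\ge1$.
   Context: Fix $n\ge 4$, $\epsilon\in\{0,1\}^n$. For $\epsilon^\ast\in\{0,1\}^k$: $\mathbb I=\{1,\dots,k\}$, $\alpha_i=\delta_i-\delta_{i+1}$, $\langle\alpha_i,\delta_j^\vee\rangle$ the coefficient of $\delta_j$ in $\alpha_i$, $I_{\rm even}=\{i:\epsilon^\ast_i=\epsilon^\ast_{i+1}\}$, $I_{\rm odd}$ its complement, $[2]=q+q^{-1}$, $q_j=q$ if $\epsilon^\ast_j=0$, $q_j=-q^{-1}$ if $\epsilon^\ast_j=1$. $\mathring{\mathcal U}(\epsilon^\ast)$ is generated over $\mathbb Q(q)$ by pairwise commuting invertible $\omega_j$ ($j\in\mathbb I$) and $e_i,f_i$ ($1\le i\le k-1$) with relations $\omega_je_i\omega_j^{-1}=q_j^{\langle\alpha_i,\delta_j^\vee\rangle}e_i$, $\omega_jf_i\omega_j^{-1}=q_j^{-\langle\alpha_i,\delta_j^\vee\rangle}f_i$,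 $e_if_j-f_je_i=\delta_{ij}(k_i-k_i^{-1})/(q-q^{-1})$, $k_i=\omega_i\omega_{i+1}^{-1}$, $e_i^2=f_i^2=0$ ($i\in I_{\rm odd}$) and Serre-type relations ($e_ie_j=e_je_i$ for $|i-j|>1$; $e_i^2e_j-(-1)^{\epsilon^\ast_i}[2]e_ie_je_i+e_je_i^2=0$ for $i\in I_{\rm even}$, $|i-j|=1$; $e_ie_{i-1}e_ie_{i+1}-e_ie_{i+1}e_ie_{i-1}+e_{i+1}e_ie_{i-1}e_i-e_{i-1}e_ie_{i+1}e_i+(-1)^{\epsilon^\ast_i}[2]e_ie_{i-1}e_{i+1}e_i=0$ for $i\in I_{\rm odd}$; same for $f$). Tensor products use $\Delta(\omega_j)=\omega_j\otimes\omega_j$, $\Delta(e_i)=e_i\otimes1+k_i^{-1}\otimes e_i$, $\Delta(f_i)=f_i\otimes k_i+1\otimes f_i$. The natural representation $\mathcal V$ of $\mathring{\mathcal U}(\epsilon^\ast)$ is $\bigoplus_{j\in\mathbb I}\mathbb Q(q)v_j$ with $\omega_iv_j=q_i^{\delta_{ij}}v_j$, $e_kv_j=\delta_{k,j-1}v_{j-1}$, $f_kv_j=\delta_{kj}v_{j+1}$. Action via $\phi$: $\mathring{\mathcal U}(\epsilon')$ (generators $\omega'_l$, $1\le l\le n-1$, and $e'_j,f'_j$, $1\le j\le n-2$) acts on $\mathring{\mathcal U}(\epsilon)$-modules through $\omega'_l\mapsto\omega_l$ ($l<i$), $\omega_{l+1}$ ($l\ge i$), $e'_j\mapsto E_j$,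 $f'_j\mapsto F_j$ where: if $2\le i\le n-1$, $E_j=e_j,F_j=f_j$ ($j\le i-2$), $E_{i-1}=e_{i-1}e_i-D\,e_ie_{i-1}$, $F_{i-1}=f_if_{i-1}-D^{-1}f_{i-1}f_i$ with $D=q_{i-1}^{\langle\alpha_i,\delta_{i-1}^\vee\rangle}q_i^{-\langle\alpha_i,\delta_i^\vee\rangle}$, and $E_j=e_{j+1},F_j=f_{j+1}$ ($j\ge i$); if $i=n$, $E_j=e_j,F_j=f_j$; if $i=1$, $E_j=e_{j+1},F_j=f_{j+1}$. Truncation: for a $\mathring{\mathcal U}(\epsilon)$-submodule $V$ of a tensor power of $\mathcal V$, with weight spaces $V_\mu=\{u:\omega_ju=q_j^{\mu_j}u\}$, $\mu=\sum\mu_j\delta_j$, $\mathfrak{tr}^\epsilon_{\epsilon'}(V)=\bigoplus_{\mu:\ \mu_i=0}V_\mu$ (where $i$ is the removed position). *)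

theory Defs
  imports "HOL-Computational_Algebra.Polynomial" "HOL-Computational_Algebra.Fraction_Field"
begin

type_synonym qf = "rat poly fract"

definition qq :: qf where "qq = Fract [:0, 1:] 1"

section \<open>Parity sequences (entries 0/1, 1-based indexing)\<close>

definition eps_at :: "nat list \<Rightarrow> nat \<Rightarrow> nat" where
  "eps_at eps j = eps ! (j - 1)"

definition valid_eps :: "nat list \<Rightarrow> bool" where
  "valid_eps eps \<longleftrightarrow> set eps \<subseteq> {0, 1}"

definition homogeneous :: "nat list \<Rightarrow> bool" where
  "homogeneous eps \<longleftrightarrow> (\<forall>a\<in>set eps. \<forall>b\<in>set eps. a = b)"

definition remove_entry :: "nat list \<Rightarrow> nat \<Rightarrow> nat list" where
  "remove_entry eps i = take (i - 1) eps @ drop i eps"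

definition qj :: "nat list \<Rightarrow> nat \<Rightarrow> qf" where
  "qj eps j = (if eps_at eps j = 0 then qq else - inverse qq)"

text \<open>The pairing <alpha_i, delta_j^vee>: coefficient of delta_j in delta_i - delta_{i+1}.\<close>
definition pair :: "nat \<Rightarrow> nat \<Rightarrow> int" where
  "pair i j = (if j = i then 1 else if j = i + 1 then -1 else 0)"

text \<open>Vectors are coordinate functions 'x => Q(q); a representation of U(eps*)
  (eps* of length k) is a carrier together with operators for omega_j (1<=j<=k),
  e_i, f_i (1<=i<=k-1).\<close>

record 'x rep =
  car :: "('x \<Rightarrow> qf) set"
  om  :: "nat \<Rightarrow> ('x \<Rightarrow> qf) \<Rightarrow> ('x \<Rightarrow> qf)"
  ee  :: "nat \<Rightarrow> ('x \<Rightarrow> qf) \<Rightarrow> ('x \<Rightarrow> qf)"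
  ff  :: "nat \<Rightarrow> ('x \<Rightarrow> qf) \<Rightarrow> ('x \<Rightarrow> qf)"

text \<open>M a b = coefficient of v_a in M v_b.\<close>
type_synonym mat = "nat \<Rightarrow> nat \<Rightarrow> qf"

definition id_mat :: mat where
  "id_mat a b = (if a = b then 1 else 0)"

definition om_diag :: "nat list \<Rightarrow> nat \<Rightarrow> nat \<Rightarrow> qf" where
  "om_diag eps j b = qj eps j powi (if j = b then 1 else 0)"

definition om_mat :: "nat list \<Rightarrow> nat \<Rightarrow> mat" where
  "om_mat eps j a b = (if a = b then om_diag eps j b else 0)"

definition k_mat :: "nat list \<Rightarrow> nat \<Rightarrow> mat" where
  "k_mat eps i a b = (if a = b then om_diag eps i b * inverse (om_diag eps (i + 1) b) else 0)"

definition kinv_mat :: "nat list \<Rightarrow> nat \<Rightarrow> mat" where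
  "kinv_mat eps i a b = (if a = b then inverse (om_diag eps i b * inverse (om_diag eps (i + 1) b)) else 0)"

definition e_mat :: "nat \<Rightarrow> mat" where
  "e_mat i a b = (if b = i + 1 \<and> a = i then 1 else 0)"

definition f_mat :: "nat \<Rightarrow> mat" where
  "f_mat i a b = (if b = i \<and> a = i + 1 then 1 else 0)"

definition nat_space :: "nat \<Rightarrow> (nat \<Rightarrow> qf) set" where
  "nat_space k = {v. \<forall>j. v j \<noteq> 0 \<longrightarrow> j \<in> {1..k}}"

definition mat_apply :: "nat \<Rightarrow> mat \<Rightarrow> (nat \<Rightarrow> qf) \<Rightarrow> (nat \<Rightarrow> qf)" where
  "mat_apply k M v = (\<lambda>a. if a \<in> {1..k} then (\<Sum>b = 1..k. M a b * v b) else 0)"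

definition natrep :: "nat list \<Rightarrow> nat rep" where
  "natrep eps = \<lparr> car = nat_space (length eps),
      om = (\<lambda>j. mat_apply (length eps) (om_mat eps j)),
      ee = (\<lambda>i. mat_apply (length eps) (e_mat i)),
      ff = (\<lambda>i. mat_apply (length eps) (f_mat i)) \<rparr>"

section \<open>Tensor powers: V^{\<otimes>l} with basis v_{w_1} \<otimes> ... \<otimes> v_{w_l}, w a word\<close>

definition words :: "nat \<Rightarrow> nat \<Rightarrow> nat list set" where
  "words k l = {w. length w = l \<and> set w \<subseteq> {1..k}}"

definition tens_space :: "nat \<Rightarrow> nat \<Rightarrow> (nat list \<Rightarrow> qf) set" where
  "tens_space k l = {u. \<forall>w. u w \<noteq> 0 \<longrightarrow> w \<in> words k l}"

definition tensor_op :: "nat \<Rightarrow> mat list \<Rightarrow> (nat list \<Rightarrow> qf) \<Rightarrow> (nat list \<Rightarrow> qf)" where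
  "tensor_op k Ms u = (\<lambda>w. if w \<in> words k (length Ms) then
      (\<Sum>w' \<in> words k (length Ms). (\<Prod>p < length Ms. (Ms ! p) (w ! p) (w' ! p)) * u w') else 0)"

text \<open>Iterated coproducts: Delta(omega) = omega \<otimes> omega,
  Delta(e_i) = e_i \<otimes> 1 + k_i^{-1} \<otimes> e_i, Delta(f_i) = f_i \<otimes> k_i + 1 \<otimes> f_i.\<close>
definition tensrep :: "nat list \<Rightarrow> nat \<Rightarrow> nat list rep" where
  "tensrep eps l = \<lparr> car = tens_space (length eps) l,
      om = (\<lambda>j. tensor_op (length eps) (replicate l (om_mat eps j))),
      ee = (\<lambda>i u. (\<lambda>w. \<Sum>p<l. tensor_op (length eps)
              (replicate p (kinv_mat eps i) @ [e_mat i] @ replicate (l - p - 1) id_mat) u w)),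
      ff = (\<lambda>i u. (\<lambda>w. \<Sum>p<l. tensor_op (length eps)
              (replicate p id_mat @ [f_mat i] @ replicate (l - p - 1) (k_mat eps i)) u w)) \<rparr>"

definition weight_space :: "nat list \<Rightarrow> 'x rep \<Rightarrow> (nat \<Rightarrow> int) \<Rightarrow> ('x \<Rightarrow> qf) set" where
  "weight_space eps R mu = {u \<in> car R. \<forall>j \<in> {1..length eps}.
      om R j u = (\<lambda>x. (qj eps j powi mu j) * u x)}"

definition trunc :: "nat list \<Rightarrow> nat \<Rightarrow> 'x rep \<Rightarrow> ('x \<Rightarrow> qf) set" where
  "trunc eps i R = {u. \<exists>M g. finite M \<and> (\<forall>mu\<in>M. mu i = 0 \<and> g mu \<in> weight_space eps R mu)
        \<and> u = (\<lambda>x. \<Sum>mu\<in>M. g mu x)}"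

definition D_const :: "nat list \<Rightarrow> nat \<Rightarrow> qf" where
  "D_const eps i = (qj eps (i - 1) powi pair i (i - 1)) * (qj eps i powi (- pair i i))"

definition phi_rep :: "nat list \<Rightarrow> nat \<Rightarrow> 'x rep \<Rightarrow> 'x rep" where
  "phi_rep eps i R = \<lparr> car = trunc eps i R,
     om = (\<lambda>l. if l < i then om R l else om R (l + 1)),
     ee = (\<lambda>j u. if 2 \<le> i \<and> i \<le> length eps - 1 then
              (if j \<le> i - 2 then ee R j u
               else if j = i - 1 then
                 (\<lambda>x. ee R (i - 1) (ee R i u) x - D_const eps i * ee R i (ee R (i - 1) u) x)
               else ee R (j + 1) u)
            else if i = length eps then ee R j u
            else ee R (j + 1) u),
     ff = (\<lambda>j u. if 2 \<le> i \<and> i \<le> length eps - 1 then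
              (if j \<le> i - 2 then ff R j u
               else if j = i - 1 then
                 (\<lambda>x. ff R i (ff R (i - 1) u) x - inverse (D_const eps i) * ff R (i - 1) (ff R i u) x)
               else ff R (j + 1) u)
            else if i = length eps then ff R j u
            else ff R (j + 1) u) \<rparr>"

definition stable :: "nat \<Rightarrow> 'x rep \<Rightarrow> bool" where
  "stable k R \<longleftrightarrow> (\<forall>u \<in> car R.
      (\<forall>j \<in> {1..k}. om R j u \<in> car R) \<and>
      (\<forall>j \<in> {1..k - 1}. ee R j u \<in> car R \<and> ff R j u \<in> car R))"

definition rep_iso :: "nat \<Rightarrow> 'x rep \<Rightarrow> 'y rep \<Rightarrow> bool" where
  "rep_iso k R S \<longleftrightarrow> (\<exists>T. bij_betw T (car R) (car S) \<and>
      (\<forall>u \<in> car R. \<forall>v \<in> car R. \<forall>a b.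
          T (\<lambda>x. a * u x + b * v x) = (\<lambda>y. a * T u y + b * T v y)) \<and>
      (\<forall>u \<in> car R.
         (\<forall>j \<in> {1..k}. T (om R j u) = om S j (T u)) \<and>
         (\<forall>j \<in> {1..k - 1}. T (ee R j u) = ee S j (T u) \<and> T (ff R j u) = ff S j (T u))))"

end

theory Submission
  imports Defs
begin

(* The truncation of V (resp. of V^l) is spanned by the basis vectors v_b with b \<noteq> i (resp. by
   the basis tensors whose word avoids the letter i), because \<omega>_i scales a basis tensor by q_i^c,
   c the number of letters i, and q_i^c \<noteq> 1 for c > 0. The increasing bijection skip i from
   {1..n-1} onto {1..n} - {i} identifies this span with V' (resp. V'^l). Every generator of
   U(eps') other than e'_(i-1), f'_(i-1) acts through a generator of U(eps) whose index is shifted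
   by the same relabelling, so it is intertwined. In E_(i-1) = e_(i-1) e_i - D e_i e_(i-1) the
   second term would have to lower a letter i of a word avoiding i and vanishes, while the first
   moves a letter i+1 down to i-1 and collects the Cartan factors (k_(i-1) k_i)^-1 = k'_(i-1)^-1
   of the coproduct; F_(i-1) is dual. *)

lemma one_less_qq: "1 < qq"
proof -
  have "[:0, 1:] - 1 = ([:-1, 1:] :: rat poly)" by (simp add: one_pCons)
  then have "pos_poly ([:0, 1:] - (1::rat poly))" by (simp add: pos_poly_pCons)
  then show ?thesis unfolding qq_def
    by (subst one_less_Fract_iff[OF zero_less_one]) (simp_all add: less_poly_def)
qed

lemma qj_power_neq_one:
  assumes "c > 0" shows "qj eps j ^ c \<noteq> 1"
proof -
  have "1 < qq ^ c" using one_less_qq assms by (simp add: one_less_power)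
  moreover have "\<bar>(- inverse qq) ^ c\<bar> < 1"
    unfolding power_abs using one_less_qq assms
    by (intro power_less_one_iff[THEN iffD2]) (auto simp: inverse_less_1_iff)
  then have "(- inverse qq) ^ c \<noteq> 1" by (metis abs_one order_less_irrefl)
  ultimately show ?thesis unfolding qj_def by auto
qed

lemma qj_neq_zero: "qj eps j \<noteq> 0"
  using one_less_qq unfolding qj_def by auto

lemma om_diag_eq: "om_diag eps j b = (if j = b then qj eps j else 1)"
  unfolding om_diag_def by simp

lemma om_diag_neq_zero: "om_diag eps j b \<noteq> 0"
  by (simp add: om_diag_eq qj_neq_zero)

lemma prod_om_diag: "(\<Prod>r<l. om_diag eps j (w ! r)) = qj eps j ^ card {r \<in> {..<l}. w ! r = j}"
proof -
  have "(\<Prod>r<l. om_diag eps j (w ! r)) = (\<Prod>r<l. if w ! r = j then qj eps j else 1)"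
    by (intro prod.cong) (auto simp: om_diag_eq)
  also have "\<dots> = (\<Prod>r \<in> {r \<in> {..<l}. w ! r = j}. qj eps j)"
    by (simp add: prod.If_cases Int_def)
  finally show ?thesis by simp
qed

definition k_diag :: "nat list \<Rightarrow> nat \<Rightarrow> nat \<Rightarrow> qf" where
  "k_diag eps j b = om_diag eps j b * inverse (om_diag eps (j + 1) b)"

lemma k_mat_eq: "k_mat eps j a b = (if a = b then k_diag eps j b else 0)"
  unfolding k_mat_def k_diag_def by simp

lemma kinv_mat_eq: "kinv_mat eps j a b = (if a = b then inverse (k_diag eps j b) else 0)"
  unfolding kinv_mat_def k_diag_def by simp

lemma e_mat_eq: "e_mat j a b = (if b = Suc a then (if a = j then 1 else 0) else 0)"
  unfolding e_mat_def by auto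

lemma f_mat_eq: "f_mat j a b = (if b = a - 1 then (if a = Suc j then 1 else 0) else 0)"
  unfolding f_mat_def by auto

section \<open>Tensor products of monomial matrices\<close>

lemma words_length: "w \<in> words k l \<Longrightarrow> length w = l"
  unfolding words_def by simp

lemma finite_words: "finite (words k l)"
proof -
  have "words k l = {w. set w \<subseteq> {1..k} \<and> length w = l}" unfolding words_def by auto
  then show ?thesis using finite_lists_length_eq[of "{1..k}" l] by simp
qed

lemma list_update_words: "w \<in> words k l \<Longrightarrow> a \<in> {1..k} \<Longrightarrow> w[p := a] \<in> words k l"
  unfolding words_def using set_update_subset_insert[of w p a] by auto

lemma tensor_op_row_monomial:
  assumes len: "length Ms = l"
    and Ms: "\<And>r a b. r < l \<Longrightarrow> (Ms ! r) a b = (if b = g r a then c r a else 0)"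
    and u: "u \<in> tens_space k l"
  shows "tensor_op k Ms u w = (if w \<in> words k l then
      (\<Prod>r<l. c r (w ! r)) * u (map (\<lambda>r. g r (w ! r)) [0..<l]) else 0)"
proof (cases "w \<in> words k l")
  case True
  define v where "v = map (\<lambda>r. g r (w ! r)) [0..<l]"
  have "(\<Prod>r<l. (Ms ! r) (w ! r) (w' ! r)) = 0" if w': "w' \<in> words k l" "w' \<noteq> v" for w'
  proof -
    have "length w' = length v" using w'(1) words_length by (simp add: v_def)
    then obtain r where "r < l" "w' ! r \<noteq> v ! r"
      using w'(2) nth_equalityI[of w' v] by (auto simp: v_def)
    then show ?thesis using Ms by (intro prod_zero) (auto simp: v_def)
  qed
  then have "(\<Sum>w' \<in> words k l. (\<Prod>r<l. (Ms ! r) (w ! r) (w' ! r)) * u w')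
      = (\<Sum>w' \<in> words k l. if w' = v then (\<Prod>r<l. c r (w ! r)) * u v else 0)"
    using Ms by (intro sum.cong) (auto simp: v_def)
  also have "\<dots> = (\<Prod>r<l. c r (w ! r)) * u v"
    using u finite_words[of k l] unfolding tens_space_def by (auto simp: sum.delta)
  finally show ?thesis using True len unfolding tensor_op_def v_def by simp
qed (use len in \<open>simp add: tensor_op_def\<close>)

lemma prod_lessThan_split_at:
  fixes p l :: nat
  assumes "p < l"
  shows "(\<Prod>r<l. if r < p then x r else if r = p then y else z r)
       = (\<Prod>r<p. x r) * y * (\<Prod>r\<in>{p<..<l}. z r)"
proof -
  let ?f = "\<lambda>r. if r < p then x r else if r = p then y else z r"
  have "{..<l} = {..<p} \<union> {p} \<union> {p<..<l}" using assms by auto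
  then have "(\<Prod>r<l. ?f r) = (\<Prod>r\<in>{..<p} \<union> {p} \<union> {p<..<l}. ?f r)" by simp
  also have "\<dots> = (\<Prod>r\<in>{..<p}. ?f r) * (\<Prod>r\<in>{p}. ?f r) * (\<Prod>r\<in>{p<..<l}. ?f r)"
    by (subst prod.union_disjoint; auto simp: prod.union_disjoint mult_ac)
  also have "\<dots> = (\<Prod>r<p. x r) * y * (\<Prod>r\<in>{p<..<l}. z r)"
    by (intro arg_cong2[where f="(*)"] prod.cong) auto
  finally show ?thesis .
qed

lemma sum_if_unique:
  fixes F :: "nat \<Rightarrow> 'a::comm_monoid_add"
  assumes "p < l" "\<And>q. q < l \<Longrightarrow> P q \<longleftrightarrow> q = p"
  shows "(\<Sum>q<l. if P q then F q else 0) = F p"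
proof -
  have "(\<Sum>q<l. if P q then F q else 0) = (\<Sum>q<l. if q = p then F q else 0)"
    using assms(2) by (intro sum.cong) auto
  then show ?thesis using assms(1) by simp
qed

lemma tensor_op_single_site:
  assumes p: "p < l" and u: "u \<in> tens_space k l"
    and A: "\<And>a b. A a b = (if a = b then \<alpha> a else 0)"
    and B: "\<And>a b. B a b = (if b = h a then \<beta> a else 0)"
    and C: "\<And>a b. C a b = (if a = b then \<gamma> a else 0)"
  shows "tensor_op k (replicate p A @ [B] @ replicate (l - p - 1) C) u w =
    (if w \<in> words k l then (\<Prod>r<p. \<alpha> (w ! r)) * \<beta> (w ! p) * (\<Prod>r\<in>{p<..<l}. \<gamma> (w ! r))
       * u (w[p := h (w ! p)]) else 0)"
proof -
  define c where "c r a = (if r < p then \<alpha> a else if r = p then \<beta> a else \<gamma> a)" for r a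
  define g where "g r a = (if r = p then h a else a)" for r a
  have "tensor_op k (replicate p A @ [B] @ replicate (l - p - 1) C) u w =
    (if w \<in> words k l then (\<Prod>r<l. c r (w ! r)) * u (map (\<lambda>r. g r (w ! r)) [0..<l]) else 0)"
    by (rule tensor_op_row_monomial) (use p u A B C in \<open>auto simp: nth_append c_def g_def\<close>)
  moreover have "(\<Prod>r<l. c r (w ! r))
      = (\<Prod>r<p. \<alpha> (w ! r)) * \<beta> (w ! p) * (\<Prod>r\<in>{p<..<l}. \<gamma> (w ! r))"
  proof -
    have "(\<Prod>r<l. c r (w ! r))
        = (\<Prod>r<l. if r < p then \<alpha> (w ! r) else if r = p then \<beta> (w ! p) else \<gamma> (w ! r))"
      by (intro prod.cong) (auto simp: c_def)
    also have "\<dots> = (\<Prod>r<p. \<alpha> (w ! r)) * \<beta> (w ! p) * (\<Prod>r\<in>{p<..<l}. \<gamma> (w ! r))"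
      by (rule prod_lessThan_split_at[OF p])
    finally show ?thesis .
  qed
  moreover have "map (\<lambda>r. g r (w ! r)) [0..<l] = w[p := h (w ! p)]" if "w \<in> words k l"
    using that p words_length unfolding g_def by (intro nth_equalityI) auto
  ultimately show ?thesis by simp
qed

section \<open>The generators on V and on its tensor powers\<close>

lemma natrep_om:
  "om (natrep eps) j v a = (if a \<in> {1..length eps} then om_diag eps j a * v a else 0)"
proof -
  have "(\<Sum>b = 1..length eps. om_mat eps j a b * v b)
      = (\<Sum>b = 1..length eps. if b = a then om_diag eps j a * v a else 0)"
    by (intro sum.cong) (auto simp: om_mat_def)
  then show ?thesis unfolding natrep_def mat_apply_def by simp
qed

lemma natrep_ee:
  "ee (natrep eps) j v a = (if a \<in> {1..length eps} \<and> a = j \<and> Suc j \<le> length eps then v (Suc j) else 0)"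
proof -
  have "(\<Sum>b = 1..length eps. e_mat j a b * v b)
      = (\<Sum>b = 1..length eps. if b = Suc j then (if a = j then v (Suc j) else 0) else 0)"
    by (intro sum.cong) (auto simp: e_mat_def)
  then show ?thesis unfolding natrep_def mat_apply_def by auto
qed

lemma natrep_ff:
  "ff (natrep eps) j v a = (if a \<in> {1..length eps} \<and> a = Suc j \<and> j \<in> {1..length eps} then v j else 0)"
proof -
  have "(\<Sum>b = 1..length eps. f_mat j a b * v b)
      = (\<Sum>b = 1..length eps. if b = j then (if a = Suc j then v j else 0) else 0)"
    by (intro sum.cong) (auto simp: f_mat_def)
  then show ?thesis unfolding natrep_def mat_apply_def by auto
qed

lemma natrep_closed:
  "om (natrep eps) j u \<in> nat_space (length eps)"
  "ee (natrep eps) j u \<in> nat_space (length eps)"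
  "ff (natrep eps) j u \<in> nat_space (length eps)"
  unfolding nat_space_def by (auto simp: natrep_om natrep_ee natrep_ff split: if_splits)

lemma nat_space_diff:
  assumes "u \<in> nat_space k" "v \<in> nat_space k"
  shows "(\<lambda>x. u x - c * v x) \<in> nat_space k"
proof -
  have "u x = 0" "v x = 0" if "x \<notin> {1..k}" for x
    using assms that unfolding nat_space_def by blast+
  then have "x \<in> {1..k}" if "u x - c * v x \<noteq> 0" for x
    using that by (metis diff_zero mult_zero_right)
  then show ?thesis unfolding nat_space_def by blast
qed

lemma tensrep_closed:
  "om (tensrep eps l) j u \<in> tens_space (length eps) l"
  "ee (tensrep eps l) j u \<in> tens_space (length eps) l"
  "ff (tensrep eps l) j u \<in> tens_space (length eps) l"
  unfolding tens_space_def tensrep_def tensor_op_def by (auto intro!: sum.neutral)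

lemma tensrep_om:
  assumes "u \<in> tens_space (length eps) l"
  shows "om (tensrep eps l) j u w = (if w \<in> words (length eps) l then
           qj eps j ^ card {r \<in> {..<l}. w ! r = j} * u w else 0)"
proof -
  have "om (tensrep eps l) j u w = tensor_op (length eps) (replicate l (om_mat eps j)) u w"
    unfolding tensrep_def by simp
  also have "\<dots> = (if w \<in> words (length eps) l then
      (\<Prod>r<l. om_diag eps j (w ! r)) * u (map (\<lambda>r. w ! r) [0..<l]) else 0)"
    by (rule tensor_op_row_monomial[where g="\<lambda>r a. a"]) (use assms in \<open>auto simp: om_mat_def\<close>)
  finally show ?thesis using words_length map_nth by (metis prod_om_diag)
qed

lemma tensrep_ee:
  assumes "u \<in> tens_space (length eps) l"
  shows "ee (tensrep eps l) j u w = (if w \<in> words (length eps) l then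
     (\<Sum>p<l. if w ! p = j then (\<Prod>r<p. inverse (k_diag eps j (w ! r))) * u (w[p := Suc j]) else 0)
     else 0)"
proof -
  have "tensor_op (length eps) (replicate p (kinv_mat eps j) @ [e_mat j] @ replicate (l - p - 1) id_mat) u w
     = (if w \<in> words (length eps) l then
          (if w ! p = j then (\<Prod>r<p. inverse (k_diag eps j (w ! r))) * u (w[p := Suc j]) else 0) else 0)"
    if "p < l" for p
    using tensor_op_single_site[OF that assms, of "kinv_mat eps j" "\<lambda>a. inverse (k_diag eps j a)"
        "e_mat j" Suc "\<lambda>a. if a = j then 1 else 0" id_mat "\<lambda>_. 1"]
    by (simp add: kinv_mat_eq e_mat_eq id_mat_def)
  then show ?thesis unfolding tensrep_def by simp
qed

lemma tensrep_ff:
  assumes "u \<in> tens_space (length eps) l"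
  shows "ff (tensrep eps l) j u w = (if w \<in> words (length eps) l then
     (\<Sum>p<l. if w ! p = Suc j then (\<Prod>r\<in>{p<..<l}. k_diag eps j (w ! r)) * u (w[p := j]) else 0)
     else 0)"
proof -
  have "tensor_op (length eps) (replicate p id_mat @ [f_mat j] @ replicate (l - p - 1) (k_mat eps j)) u w
     = (if w \<in> words (length eps) l then
          (if w ! p = Suc j then (\<Prod>r\<in>{p<..<l}. k_diag eps j (w ! r)) * u (w[p := j]) else 0) else 0)"
    if "p < l" for p
    using tensor_op_single_site[OF that assms, of id_mat "\<lambda>_. 1" "f_mat j" "\<lambda>a. a - 1"
        "\<lambda>a. if a = Suc j then 1 else 0" "k_mat eps j" "k_diag eps j"]
    by (simp add: k_mat_eq f_mat_eq id_mat_def)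
  then show ?thesis unfolding tensrep_def by simp
qed

lemma tensrep_ee_vanish:
  assumes "u \<in> tens_space (length eps) l" "j \<notin> set w"
  shows "ee (tensrep eps l) j u w = 0"
proof -
  have "w ! p \<noteq> j" if "w \<in> words (length eps) l" "p < l" for p
    using assms(2) that nth_mem words_length by metis
  then show ?thesis by (simp add: tensrep_ee[OF assms(1)])
qed

lemma tensrep_ff_vanish:
  assumes "u \<in> tens_space (length eps) l" "Suc j \<notin> set w"
  shows "ff (tensrep eps l) j u w = 0"
proof -
  have "w ! p \<noteq> Suc j" if "w \<in> words (length eps) l" "p < l" for p
    using assms(2) that nth_mem words_length by metis
  then show ?thesis by (simp add: tensrep_ff[OF assms(1)])
qed

text \<open>As x has no letter j + 1, the only letter j + 1 of x[p := j + 1] is at p, so the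
  inner sum collapses to a single term.\<close>
lemma tensrep_ee_ee:
  assumes u: "u \<in> tens_space (length eps) l" and x: "x \<in> words (length eps) l"
    and "Suc j \<notin> set x" "Suc (Suc j) \<le> length eps"
  shows "ee (tensrep eps l) j (ee (tensrep eps l) (Suc j) u) x
    = (\<Sum>p<l. if x ! p = j then (\<Prod>r<p. inverse (k_diag eps j (x ! r) * k_diag eps (Suc j) (x ! r)))
                 * u (x[p := Suc (Suc j)]) else 0)"
proof -
  have len: "length x = l" using x words_length by blast
  have "ee (tensrep eps l) (Suc j) u (x[p := Suc j])
      = (\<Prod>r<p. inverse (k_diag eps (Suc j) (x ! r))) * u (x[p := Suc (Suc j)])" if p: "p < l" for p
  proof -
    have "x[p := Suc j] \<in> words (length eps) l" using list_update_words[OF x] assms(4) by simp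
    moreover have "x[p := Suc j] ! q = Suc j \<longleftrightarrow> q = p" if "q < l" for q
      using that p len assms(3) nth_mem by (metis nth_list_update)
    ultimately have "ee (tensrep eps l) (Suc j) u (x[p := Suc j])
        = (\<Prod>r<p. inverse (k_diag eps (Suc j) (x[p := Suc j] ! r))) * u ((x[p := Suc j])[p := Suc (Suc j)])"
      by (simp only: tensrep_ee[OF u] if_True sum_if_unique[OF p])
    also have "\<dots> = (\<Prod>r<p. inverse (k_diag eps (Suc j) (x ! r))) * u (x[p := Suc (Suc j)])"
      by (simp add: nth_list_update)
    finally show ?thesis .
  qed
  then show ?thesis
    using x by (auto simp: tensrep_ee[OF tensrep_closed(2)] prod.distrib intro!: sum.cong)
qed

lemma tensrep_ff_ff:
  assumes u: "u \<in> tens_space (length eps) l" and x: "x \<in> words (length eps) l"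
    and "Suc j \<notin> set x" "Suc j \<le> length eps"
  shows "ff (tensrep eps l) (Suc j) (ff (tensrep eps l) j u) x
    = (\<Sum>p<l. if x ! p = Suc (Suc j) then (\<Prod>r\<in>{p<..<l}. k_diag eps (Suc j) (x ! r) * k_diag eps j (x ! r))
                 * u (x[p := j]) else 0)"
proof -
  have len: "length x = l" using x words_length by blast
  have "ff (tensrep eps l) j u (x[p := Suc j])
      = (\<Prod>r\<in>{p<..<l}. k_diag eps j (x ! r)) * u (x[p := j])" if p: "p < l" for p
  proof -
    have "x[p := Suc j] \<in> words (length eps) l" using list_update_words[OF x] assms(4) by simp
    moreover have "x[p := Suc j] ! q = Suc j \<longleftrightarrow> q = p" if "q < l" for q
      using that p len assms(3) nth_mem by (metis nth_list_update)
    ultimately have "ff (tensrep eps l) j u (x[p := Suc j])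
        = (\<Prod>r\<in>{p<..<l}. k_diag eps j (x[p := Suc j] ! r)) * u ((x[p := Suc j])[p := j])"
      by (simp only: tensrep_ff[OF u] if_True sum_if_unique[OF p])
    also have "\<dots> = (\<Prod>r\<in>{p<..<l}. k_diag eps j (x ! r)) * u (x[p := j])"
      by (simp add: nth_list_update)
    finally show ?thesis .
  qed
  then show ?thesis
    using x by (auto simp: tensrep_ff[OF tensrep_closed(3)] prod.distrib intro!: sum.cong)
qed

section \<open>Truncation\<close>

text \<open>A basis vector x of weight c 1 x, c 2 x, ... lies in the truncation iff c i x = 0: a weight
  vector whose weight vanishes at i is fixed by \<omega> i, whereas \<omega> i scales x by q_i^(c i x) \<noteq> 1.\<close>
lemma trunc_diagonal_subset:
  fixes R :: "'x rep" and c :: "nat \<Rightarrow> 'x \<Rightarrow> nat"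
  assumes i: "i \<in> {1..length eps}"
    and car: "car R = {u. \<forall>x. u x \<noteq> 0 \<longrightarrow> x \<in> B}"
    and om: "\<And>j u. u \<in> car R \<Longrightarrow> om R j u = (\<lambda>x. qj eps j ^ c j x * u x)"
  shows "trunc eps i R \<subseteq> {u \<in> car R. \<forall>x. c i x \<noteq> 0 \<longrightarrow> u x = 0}"
proof
  fix u assume "u \<in> trunc eps i R"
  then obtain M g where M: "finite M" "\<And>\<mu>. \<mu> \<in> M \<Longrightarrow> \<mu> i = 0 \<and> g \<mu> \<in> weight_space eps R \<mu>"
    and u: "u = (\<lambda>x. \<Sum>\<mu>\<in>M. g \<mu> x)" unfolding trunc_def by blast
  have g_car: "g \<mu> \<in> car R" and g_zero: "\<And>x. c i x \<noteq> 0 \<Longrightarrow> g \<mu> x = 0" if "\<mu> \<in> M" for \<mu>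
  proof -
    show "g \<mu> \<in> car R" using M(2)[OF that] unfolding weight_space_def by simp
    have "om R i (g \<mu>) = g \<mu>" using M(2)[OF that] i unfolding weight_space_def by simp
    then have "qj eps i ^ c i x * g \<mu> x = 1 * g \<mu> x" for x
      using om[OF \<open>g \<mu> \<in> car R\<close>] by (metis mult_1)
    then show "g \<mu> x = 0" if "c i x \<noteq> 0" for x
      using qj_power_neq_one that by (metis mult_cancel_right neq0_conv)
  qed
  have "u \<in> car R"
    unfolding car u using g_car car by (force intro: sum.neutral)
  then show "u \<in> {u \<in> car R. \<forall>x. c i x \<noteq> 0 \<longrightarrow> u x = 0}"
    unfolding u using g_zero by simp
qed

lemma diagonal_subset_trunc:
  fixes R :: "'x rep" and c :: "nat \<Rightarrow> 'x \<Rightarrow> nat"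
  assumes B: "finite B"
    and car: "car R = {u. \<forall>x. u x \<noteq> 0 \<longrightarrow> x \<in> B}"
    and om: "\<And>j u. u \<in> car R \<Longrightarrow> om R j u = (\<lambda>x. qj eps j ^ c j x * u x)"
  shows "{u \<in> car R. \<forall>x. c i x \<noteq> 0 \<longrightarrow> u x = 0} \<subseteq> trunc eps i R"
proof
  fix u assume u: "u \<in> {u \<in> car R. \<forall>x. c i x \<noteq> 0 \<longrightarrow> u x = 0}"
  define wt where "wt x = (\<lambda>j. int (c j x))" for x
  define M where "M = wt ` {x \<in> B. c i x = 0}"
  define g where "g \<mu> = (\<lambda>x. if x \<in> B \<and> wt x = \<mu> then u x else 0)" for \<mu>
  have "finite M" unfolding M_def using B by simp
  moreover have "\<mu> i = 0 \<and> g \<mu> \<in> weight_space eps R \<mu>" if "\<mu> \<in> M" for \<mu>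
  proof -
    have "g \<mu> \<in> car R" unfolding car g_def by auto
    moreover have "om R j (g \<mu>) x = qj eps j powi \<mu> j * g \<mu> x" for j x
    proof (cases "x \<in> B \<and> wt x = \<mu>")
      case True
      then have "\<mu> j = int (c j x)" unfolding wt_def by auto
      then show ?thesis using om[OF \<open>g \<mu> \<in> car R\<close>] by (simp add: power_int_of_nat)
    next
      case False
      then show ?thesis unfolding om[OF \<open>g \<mu> \<in> car R\<close>] by (auto simp: g_def)
    qed
    ultimately show ?thesis using that unfolding M_def weight_space_def wt_def by (auto simp: fun_eq_iff)
  qed
  moreover have "u = (\<lambda>x. \<Sum>\<mu>\<in>M. g \<mu> x)"
  proof
    fix x
    have "(\<Sum>\<mu>\<in>M. g \<mu> x) = (\<Sum>\<mu>\<in>M. if wt x = \<mu> then (if x \<in> B then u x else 0) else 0)"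
      unfolding g_def by (intro sum.cong) auto
    also have "\<dots> = (if wt x \<in> M \<and> x \<in> B then u x else 0)"
      using \<open>finite M\<close> by (simp add: sum.delta)
    also have "\<dots> = u x"
      using u car unfolding M_def wt_def by (auto simp: fun_eq_iff)
    finally show "u x = (\<Sum>\<mu>\<in>M. g \<mu> x)" by simp
  qed
  ultimately show "u \<in> trunc eps i R" unfolding trunc_def by blast
qed

lemma trunc_diagonal:
  fixes R :: "'x rep" and c :: "nat \<Rightarrow> 'x \<Rightarrow> nat"
  assumes "i \<in> {1..length eps}" "finite B"
    and "car R = {u. \<forall>x. u x \<noteq> 0 \<longrightarrow> x \<in> B}"
    and "\<And>j u. u \<in> car R \<Longrightarrow> om R j u = (\<lambda>x. qj eps j ^ c j x * u x)"
  shows "trunc eps i R = {u \<in> car R. \<forall>x. c i x \<noteq> 0 \<longrightarrow> u x = 0}"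
  using trunc_diagonal_subset[OF assms(1,3,4)] diagonal_subset_trunc[OF assms(2-4)] by (rule equalityI)

lemma trunc_natrep:
  assumes "i \<in> {1..length eps}"
  shows "trunc eps i (natrep eps) = {v \<in> nat_space (length eps). v i = 0}"
proof -
  have "om (natrep eps) j v = (\<lambda>a. qj eps j ^ (if j = a then 1 else 0) * v a)"
    if v: "v \<in> car (natrep eps)" for j v
  proof
    fix a
    have "v a = 0" if "a \<notin> {1..length eps}" using v that by (auto simp: natrep_def nat_space_def)
    then show "om (natrep eps) j v a = qj eps j ^ (if j = a then 1 else 0) * v a"
      by (auto simp: natrep_om om_diag_eq)
  qed
  then have "trunc eps i (natrep eps) = {v \<in> car (natrep eps). \<forall>a. (if i = a then 1 else 0::nat) \<noteq> 0 \<longrightarrow> v a = 0}"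
    using assms by (intro trunc_diagonal[where B="{1..length eps}"]) (auto simp: natrep_def nat_space_def)
  then show ?thesis by (simp add: natrep_def)
qed

lemma card_positions_eq_zero_iff:
  "length w = l \<Longrightarrow> card {r \<in> {..<l}. w ! r = j} = 0 \<longleftrightarrow> j \<notin> set w"
  by (auto simp: in_set_conv_nth)

lemma trunc_tensrep:
  assumes "i \<in> {1..length eps}"
  shows "trunc eps i (tensrep eps l) = {u \<in> tens_space (length eps) l. \<forall>w. i \<in> set w \<longrightarrow> u w = 0}"
proof -
  have car: "car (tensrep eps l) = {u. \<forall>w. u w \<noteq> 0 \<longrightarrow> w \<in> words (length eps) l}"
    by (simp add: tensrep_def tens_space_def)
  have om: "om (tensrep eps l) j u = (\<lambda>w. qj eps j ^ card {r \<in> {..<l}. w ! r = j} * u w)"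
    if u: "u \<in> car (tensrep eps l)" for j u
  proof
    fix w
    have us: "u \<in> tens_space (length eps) l" using u by (simp add: tensrep_def)
    then have "u w = 0" if "w \<notin> words (length eps) l" using that by (auto simp: tens_space_def)
    then show "om (tensrep eps l) j u w = qj eps j ^ card {r \<in> {..<l}. w ! r = j} * u w"
      using tensrep_om[OF us, of j w] by auto
  qed
  have card_iff: "(\<forall>w. card {r \<in> {..<l}. w ! r = i} \<noteq> 0 \<longrightarrow> u w = 0) \<longleftrightarrow> (\<forall>w. i \<in> set w \<longrightarrow> u w = 0)"
    if u: "u \<in> tens_space (length eps) l" for u
  proof -
    have "card {r \<in> {..<l}. w ! r = i} \<noteq> 0 \<longleftrightarrow> i \<in> set w" if "w \<in> words (length eps) l" for w
      using card_positions_eq_zero_iff[OF words_length[OF that]] by simp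
    moreover have "u w = 0" if "w \<notin> words (length eps) l" for w
      using u that unfolding tens_space_def by auto
    ultimately show ?thesis by metis
  qed
  have "trunc eps i (tensrep eps l)
      = {u \<in> car (tensrep eps l). \<forall>w. card {r \<in> {..<l}. w ! r = i} \<noteq> 0 \<longrightarrow> u w = 0}"
    by (rule trunc_diagonal[OF assms finite_words car om])
  also have "\<dots> = {u \<in> tens_space (length eps) l. \<forall>w. i \<in> set w \<longrightarrow> u w = 0}"
    unfolding car tens_space_def[symmetric] by (intro Collect_cong conj_cong refl card_iff)
  finally show ?thesis .
qed

section \<open>Deleting the index i\<close>

definition skip :: "nat \<Rightarrow> nat \<Rightarrow> nat" where
  "skip i b = (if b < i then b else Suc b)"

definition unskip :: "nat \<Rightarrow> nat \<Rightarrow> nat" where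
  "unskip i b = (if b < i then b else b - 1)"

lemma skip_eq_iff [simp]: "skip i a = skip i b \<longleftrightarrow> a = b"
  unfolding skip_def by auto

lemma skip_neq [simp]: "skip i a \<noteq> i"
  unfolding skip_def by auto

lemma unskip_skip [simp]: "unskip i (skip i a) = a"
  unfolding unskip_def skip_def by auto

lemma skip_unskip: "b \<noteq> i \<Longrightarrow> skip i (unskip i b) = b"
  unfolding unskip_def skip_def by auto

lemma skip_mem: "a \<in> {1..n - 1} \<Longrightarrow> skip i a \<in> {1..n}"
  unfolding skip_def by auto

lemma unskip_mem: "b \<in> {1..n} \<Longrightarrow> b \<noteq> i \<Longrightarrow> i \<in> {1..n} \<Longrightarrow> unskip i b \<in> {1..n - 1}"
  unfolding unskip_def by auto

lemma skip_Suc: "Suc j \<noteq> i \<Longrightarrow> skip i (Suc j) = Suc (skip i j)"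
  unfolding skip_def by auto

lemma skip_pred: "1 \<le> i \<Longrightarrow> skip i (i - 1) = i - 1"
  unfolding skip_def by auto

lemma skip_self: "skip i i = Suc i"
  unfolding skip_def by auto

lemma map_skip_words:
  assumes "w \<in> words (n - 1) l"
  shows "map (skip i) w \<in> words n l"
proof -
  have "\<forall>a \<in> set w. skip i a \<in> {1..n}"
    using assms skip_mem unfolding words_def by blast
  then show ?thesis using assms unfolding words_def by auto
qed

lemma map_unskip_words:
  assumes "w \<in> words n l" "i \<notin> set w" "i \<in> {1..n}"
  shows "map (unskip i) w \<in> words (n - 1) l"
proof -
  have "\<forall>b \<in> set w. unskip i b \<in> {1..n - 1}"
  proof
    fix b assume "b \<in> set w"
    then have "b \<in> {1..n}" "b \<noteq> i" using assms(1,2) unfolding words_def by auto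
    then show "unskip i b \<in> {1..n - 1}" using unskip_mem assms(3) by blast
  qed
  then show ?thesis using assms(1) unfolding words_def by auto
qed

lemma skip_notin_map: "i \<notin> set (map (skip i) w)"
  using skip_neq by (metis imageE set_map)

lemma map_skip_unskip: "i \<notin> set w \<Longrightarrow> map (skip i) (map (unskip i) w) = w"
  by (induction w) (auto simp: skip_unskip)

lemma phi_rep_car: "car (phi_rep eps i R) = trunc eps i R"
  unfolding phi_rep_def by simp

lemma phi_rep_om: "om (phi_rep eps i R) j = om R (skip i j)"
  unfolding phi_rep_def skip_def by auto

lemma phi_rep_skip:
  assumes "i \<in> {1..length eps}" "j \<in> {1..length eps - 2}" "Suc j \<noteq> i"
  shows "ee (phi_rep eps i R) j = ee R (skip i j)" "ff (phi_rep eps i R) j = ff R (skip i j)"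
  using assms unfolding phi_rep_def skip_def by (auto simp: fun_eq_iff)

lemma phi_rep_merged:
  assumes "i \<in> {2..length eps - 1}"
  shows "ee (phi_rep eps i R) (i - 1) u
      = (\<lambda>x. ee R (i - 1) (ee R i u) x - D_const eps i * ee R i (ee R (i - 1) u) x)"
    "ff (phi_rep eps i R) (i - 1) u
      = (\<lambda>x. ff R i (ff R (i - 1) u) x - inverse (D_const eps i) * ff R (i - 1) (ff R i u) x)"
  using assms unfolding phi_rep_def by auto

lemma phi_rep_natrep_closed:
  "ee (phi_rep eps i (natrep eps)) j v \<in> nat_space (length eps)"
  "ff (phi_rep eps i (natrep eps)) j v \<in> nat_space (length eps)"
  unfolding phi_rep_def
  using natrep_closed nat_space_diff[OF natrep_closed(2) natrep_closed(2)]
    nat_space_diff[OF natrep_closed(3) natrep_closed(3)]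
  by auto

section \<open>The truncations of V and of its tensor powers\<close>

locale entry_removal =
  fixes eps :: "nat list" and n i :: nat
  assumes length_eps: "length eps = n" and i_mem: "i \<in> {1..n}"
begin

abbreviation eps' :: "nat list" where "eps' \<equiv> remove_entry eps i"

lemma length_eps': "length eps' = n - 1"
  using length_eps i_mem unfolding remove_entry_def by (auto simp: min_def)

lemma qj_remove_entry: "j \<in> {1..n - 1} \<Longrightarrow> qj eps' j = qj eps (skip i j)"
  using length_eps i_mem unfolding qj_def eps_at_def remove_entry_def skip_def
  by (auto simp: nth_append min_def)

lemma om_diag_remove_entry: "j \<in> {1..n - 1} \<Longrightarrow> om_diag eps' j a = om_diag eps (skip i j) (skip i a)"
  by (simp add: om_diag_eq qj_remove_entry)

lemma k_diag_remove_entry: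
  assumes "j \<in> {1..n - 2}" "Suc j \<noteq> i"
  shows "k_diag eps' j a = k_diag eps (skip i j) (skip i a)"
proof -
  have "j \<in> {1..n - 1}" "Suc j \<in> {1..n - 1}" using assms(1) by auto
  then show ?thesis unfolding k_diag_def using assms(2) by (simp add: om_diag_remove_entry skip_Suc)
qed

lemma k_diag_remove_entry_merged:
  assumes "i \<in> {2..n - 1}"
  shows "k_diag eps' (i - 1) a = k_diag eps (i - 1) (skip i a) * k_diag eps i (skip i a)"
proof -
  have "om_diag eps' (i - 1) a = om_diag eps (i - 1) (skip i a)"
  proof -
    have "i - 1 \<in> {1..n - 1}" using assms by auto
    then show ?thesis using assms om_diag_remove_entry[of "i - 1" a] skip_pred[of i] by simp
  qed
  moreover have "om_diag eps' i a = om_diag eps (Suc i) (skip i a)"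
    using assms om_diag_remove_entry[of i a] by (simp add: skip_self)
  ultimately show ?thesis
    using assms om_diag_neq_zero unfolding k_diag_def by (simp add: field_simps)
qed

lemma rep_iso_phi_repI:
  assumes bij: "bij_betw T (trunc eps i R) (car S)"
    and linear: "\<And>u v a b. T (\<lambda>x. a * u x + b * v x) = (\<lambda>y. a * T u y + b * T v y)"
    and om: "\<And>u j. u \<in> trunc eps i R \<Longrightarrow> j \<in> {1..n - 1} \<Longrightarrow> T (om R (skip i j) u) = om S j (T u)"
    and ee: "\<And>u j. u \<in> trunc eps i R \<Longrightarrow> j \<in> {1..n - 2} \<Longrightarrow> Suc j \<noteq> i \<Longrightarrow>
      T (ee R (skip i j) u) = ee S j (T u)"
    and ff: "\<And>u j. u \<in> trunc eps i R \<Longrightarrow> j \<in> {1..n - 2} \<Longrightarrow> Suc j \<noteq> i \<Longrightarrow>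
      T (ff R (skip i j) u) = ff S j (T u)"
    and ee_merged: "\<And>u. u \<in> trunc eps i R \<Longrightarrow> i \<in> {2..n - 1} \<Longrightarrow>
      T (ee (phi_rep eps i R) (i - 1) u) = ee S (i - 1) (T u)"
    and ff_merged: "\<And>u. u \<in> trunc eps i R \<Longrightarrow> i \<in> {2..n - 1} \<Longrightarrow>
      T (ff (phi_rep eps i R) (i - 1) u) = ff S (i - 1) (T u)"
  shows "rep_iso (n - 1) (phi_rep eps i R) S"
  unfolding rep_iso_def phi_rep_car
proof (intro exI[of _ T] conjI ballI allI bij linear)
  fix u j assume "u \<in> trunc eps i R" "j \<in> {1..n - 1}"
  then show "T (om (phi_rep eps i R) j u) = om S j (T u)"
    unfolding phi_rep_om by (rule om)
next
  fix u j assume u: "u \<in> trunc eps i R" and j: "j \<in> {1..n - 1 - 1}"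
  have "T (ee (phi_rep eps i R) j u) = ee S j (T u) \<and> T (ff (phi_rep eps i R) j u) = ff S j (T u)"
  proof (cases "Suc j = i")
    case True
    then show ?thesis using j ee_merged[OF u] ff_merged[OF u] by auto
  next
    case False
    then show ?thesis
      using j i_mem length_eps ee[OF u] ff[OF u] phi_rep_skip[of i eps j R] by auto
  qed
  then show "T (ee (phi_rep eps i R) j u) = ee S j (T u)" "T (ff (phi_rep eps i R) j u) = ff S j (T u)"
    by auto
qed

lemma trunc_natrep_eq: "trunc eps i (natrep eps) = {v \<in> nat_space n. v i = 0}"
  using trunc_natrep[of i eps] length_eps i_mem by simp

definition relabel_nat :: "(nat \<Rightarrow> qf) \<Rightarrow> (nat \<Rightarrow> qf)" where
  "relabel_nat v = (\<lambda>a. if a \<in> {1..n - 1} then v (skip i a) else 0)"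

lemma relabel_nat_bij: "bij_betw relabel_nat (trunc eps i (natrep eps)) (car (natrep eps'))"
proof (rule bij_betw_byWitness[where f'="\<lambda>v a. if a \<in> {1..n} \<and> a \<noteq> i then v (unskip i a) else 0"])
  show "\<forall>v \<in> trunc eps i (natrep eps).
      (\<lambda>a. if a \<in> {1..n} \<and> a \<noteq> i then relabel_nat v (unskip i a) else 0) = v"
    using unskip_mem skip_unskip i_mem
    unfolding trunc_natrep_eq relabel_nat_def nat_space_def by (auto simp: fun_eq_iff)
  show "\<forall>v \<in> car (natrep eps'). relabel_nat (\<lambda>a. if a \<in> {1..n} \<and> a \<noteq> i then v (unskip i a) else 0) = v"
    using skip_mem length_eps'
    unfolding natrep_def relabel_nat_def nat_space_def by (auto simp: fun_eq_iff)
  show "relabel_nat ` trunc eps i (natrep eps) \<subseteq> car (natrep eps')"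
    using length_eps' unfolding relabel_nat_def natrep_def nat_space_def by (auto split: if_splits)
  show "(\<lambda>v a. if a \<in> {1..n} \<and> a \<noteq> i then v (unskip i a) else 0) ` car (natrep eps')
      \<subseteq> trunc eps i (natrep eps)"
    unfolding trunc_natrep_eq nat_space_def by (auto split: if_splits)
qed

lemma relabel_nat_om:
  assumes "j \<in> {1..n - 1}"
  shows "relabel_nat (om (natrep eps) (skip i j) v) = om (natrep eps') j (relabel_nat v)"
  using skip_mem om_diag_remove_entry[OF assms] length_eps length_eps'
  unfolding relabel_nat_def by (auto simp: natrep_om fun_eq_iff)

lemma relabel_nat_ee:
  assumes "j \<in> {1..n - 2}" "Suc j \<noteq> i"
  shows "relabel_nat (ee (natrep eps) (skip i j) v) = ee (natrep eps') j (relabel_nat v)"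
  using assms skip_mem[of "Suc j" n i] skip_mem length_eps length_eps'
  unfolding relabel_nat_def by (auto simp: natrep_ee skip_Suc fun_eq_iff)

lemma relabel_nat_ff:
  assumes "j \<in> {1..n - 2}" "Suc j \<noteq> i"
  shows "relabel_nat (ff (natrep eps) (skip i j) v) = ff (natrep eps') j (relabel_nat v)"
proof -
  have "skip i a = Suc (skip i j) \<longleftrightarrow> a = Suc j" for a
    using assms(2) by (metis skip_Suc skip_eq_iff)
  then show ?thesis
    using assms skip_mem[of j n i] skip_mem length_eps length_eps'
    unfolding relabel_nat_def by (auto simp: natrep_ff fun_eq_iff)
qed

lemma relabel_nat_ee_merged:
  assumes "i \<in> {2..n - 1}"
  shows "relabel_nat (ee (phi_rep eps i (natrep eps)) (i - 1) v) = ee (natrep eps') (i - 1) (relabel_nat v)"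
proof -
  have "skip i a = i - 1 \<longleftrightarrow> a = i - 1" for a
    using assms skip_pred[of i] by (metis skip_eq_iff atLeastAtMost_iff le_trans one_le_numeral)
  then show ?thesis
    unfolding phi_rep_merged(1)[OF assms[folded length_eps]]
    using assms skip_mem length_eps length_eps' skip_self[of i]
    unfolding relabel_nat_def by (auto simp: natrep_ee fun_eq_iff)
qed

lemma relabel_nat_ff_merged:
  assumes "i \<in> {2..n - 1}"
  shows "relabel_nat (ff (phi_rep eps i (natrep eps)) (i - 1) v) = ff (natrep eps') (i - 1) (relabel_nat v)"
proof -
  have "skip i a = Suc i \<longleftrightarrow> a = i" for a
    by (metis skip_eq_iff skip_self)
  then show ?thesis
    unfolding phi_rep_merged(2)[OF assms[folded length_eps]]
    using assms skip_mem length_eps length_eps' skip_pred[of i]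
    unfolding relabel_nat_def by (auto simp: natrep_ff fun_eq_iff)
qed

lemma natrep_iso: "rep_iso (n - 1) (phi_rep eps i (natrep eps)) (natrep eps')"
proof (rule rep_iso_phi_repI[OF relabel_nat_bij])
  show "relabel_nat (\<lambda>x. a * u x + b * v x) = (\<lambda>y. a * relabel_nat u y + b * relabel_nat v y)"
    for u v a b unfolding relabel_nat_def by auto
qed (rule relabel_nat_om relabel_nat_ee relabel_nat_ff relabel_nat_ee_merged relabel_nat_ff_merged;
    assumption)+

lemma natrep_stable: "stable (n - 1) (phi_rep eps i (natrep eps))"
  unfolding stable_def phi_rep_car trunc_natrep_eq
proof (intro ballI conjI)
  fix v j assume v: "v \<in> {v \<in> nat_space n. v i = 0}" and "j \<in> {1..n - 1}"
  show "om (phi_rep eps i (natrep eps)) j v \<in> {v \<in> nat_space n. v i = 0}"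
    unfolding phi_rep_om using natrep_closed(1)[of eps] length_eps v by (simp add: natrep_om)
next
  fix v j assume v: "v \<in> {v \<in> nat_space n. v i = 0}" and j: "j \<in> {1..n - 1 - 1}"
  have "ee (phi_rep eps i (natrep eps)) j v i = 0 \<and> ff (phi_rep eps i (natrep eps)) j v i = 0"
  proof (cases "Suc j = i")
    case True
    then have i2: "i \<in> {2..length eps - 1}" and j_eq: "j = i - 1" using j length_eps by auto
    show ?thesis unfolding j_eq phi_rep_merged[OF i2] using v i2 by (auto simp: natrep_ee natrep_ff)
  next
    case False
    then have "Suc (skip i j) \<noteq> i" using skip_Suc skip_neq by metis
    moreover have "i \<in> {1..length eps}" "j \<in> {1..length eps - 2}" using i_mem j length_eps by auto
    ultimately show ?thesis
      unfolding phi_rep_skip[OF \<open>i \<in> {1..length eps}\<close> \<open>j \<in> {1..length eps - 2}\<close> False]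
      using v skip_neq[of i j, THEN not_sym] by (auto simp: natrep_ee natrep_ff)
  qed
  then show "ee (phi_rep eps i (natrep eps)) j v \<in> {v \<in> nat_space n. v i = 0}"
    "ff (phi_rep eps i (natrep eps)) j v \<in> {v \<in> nat_space n. v i = 0}"
    using phi_rep_natrep_closed length_eps by auto
qed

lemma trunc_tensrep_eq: "trunc eps i (tensrep eps l) = {u \<in> tens_space n l. \<forall>w. i \<in> set w \<longrightarrow> u w = 0}"
  using trunc_tensrep[of i eps l] length_eps i_mem by simp

definition relabel_tens :: "nat \<Rightarrow> (nat list \<Rightarrow> qf) \<Rightarrow> (nat list \<Rightarrow> qf)" where
  "relabel_tens l u = (\<lambda>w. if w \<in> words (n - 1) l then u (map (skip i) w) else 0)"

lemma relabel_tens_bij: "bij_betw (relabel_tens l) (trunc eps i (tensrep eps l)) (car (tensrep eps' l))"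
proof (rule bij_betw_byWitness[where f'="\<lambda>u w. if w \<in> words n l \<and> i \<notin> set w then u (map (unskip i) w) else 0"])
  show "\<forall>u \<in> trunc eps i (tensrep eps l).
      (\<lambda>w. if w \<in> words n l \<and> i \<notin> set w then relabel_tens l u (map (unskip i) w) else 0) = u"
    using map_unskip_words map_skip_unskip i_mem
    unfolding trunc_tensrep_eq relabel_tens_def tens_space_def by (auto simp: fun_eq_iff)
  show "\<forall>u \<in> car (tensrep eps' l).
      relabel_tens l (\<lambda>w. if w \<in> words n l \<and> i \<notin> set w then u (map (unskip i) w) else 0) = u"
  proof
    fix u assume "u \<in> car (tensrep eps' l)"
    then have "u w = 0" if "w \<notin> words (n - 1) l" for w
      using that length_eps' unfolding tensrep_def tens_space_def by auto
    moreover note skip_notin_map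
    ultimately show "relabel_tens l (\<lambda>w. if w \<in> words n l \<and> i \<notin> set w then u (map (unskip i) w) else 0) = u"
      using map_skip_words unfolding relabel_tens_def by (auto simp: fun_eq_iff comp_def)
  qed
  show "relabel_tens l ` trunc eps i (tensrep eps l) \<subseteq> car (tensrep eps' l)"
    using length_eps' unfolding relabel_tens_def tensrep_def tens_space_def by (auto split: if_splits)
  show "(\<lambda>u w. if w \<in> words n l \<and> i \<notin> set w then u (map (unskip i) w) else 0) ` car (tensrep eps' l)
      \<subseteq> trunc eps i (tensrep eps l)"
    unfolding trunc_tensrep_eq tens_space_def by (auto split: if_splits)
qed

lemma relabel_tens_eqI:
  assumes "G \<in> tens_space (n - 1) l" "\<And>w. w \<in> words (n - 1) l \<Longrightarrow> F (map (skip i) w) = G w"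
  shows "relabel_tens l F = G"
  using assms unfolding relabel_tens_def tens_space_def by (auto simp: fun_eq_iff)

lemma relabel_tens_update:
  "w \<in> words (n - 1) l \<Longrightarrow> a \<in> {1..n - 1} \<Longrightarrow> relabel_tens l u (w[p := a]) = u ((map (skip i) w)[p := skip i a])"
  unfolding relabel_tens_def by (simp add: list_update_words map_update)

lemma relabel_tens_space: "relabel_tens l u \<in> tens_space (length eps') l"
  using length_eps' unfolding relabel_tens_def tens_space_def by auto

lemma relabel_tens_om:
  assumes u: "u \<in> tens_space n l" and j: "j \<in> {1..n - 1}"
  shows "relabel_tens l (om (tensrep eps l) (skip i j) u) = om (tensrep eps' l) j (relabel_tens l u)"
proof (rule relabel_tens_eqI)
  show "om (tensrep eps' l) j (relabel_tens l u) \<in> tens_space (n - 1) l"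
    using tensrep_closed(1)[of eps' l] length_eps' by simp
  fix w assume w: "w \<in> words (n - 1) l"
  have "{r \<in> {..<l}. map (skip i) w ! r = skip i j} = {r \<in> {..<l}. w ! r = j}"
    using words_length[OF w] by auto
  moreover have "om (tensrep eps' l) j (relabel_tens l u) w
      = qj eps' j ^ card {r \<in> {..<l}. w ! r = j} * u (map (skip i) w)"
    using tensrep_om[OF relabel_tens_space] w length_eps' by (simp add: relabel_tens_def)
  ultimately show "om (tensrep eps l) (skip i j) u (map (skip i) w) = om (tensrep eps' l) j (relabel_tens l u) w"
    using map_skip_words[OF w] u length_eps by (simp add: tensrep_om qj_remove_entry[OF j])
qed

lemma relabel_tens_ee:
  assumes u: "u \<in> tens_space n l" and j: "j \<in> {1..n - 2}" "Suc j \<noteq> i"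
  shows "relabel_tens l (ee (tensrep eps l) (skip i j) u) = ee (tensrep eps' l) j (relabel_tens l u)"
proof (rule relabel_tens_eqI)
  show "ee (tensrep eps' l) j (relabel_tens l u) \<in> tens_space (n - 1) l"
    using tensrep_closed(2)[of eps' l] length_eps' by simp
  fix w assume w: "w \<in> words (n - 1) l"
  let ?x = "map (skip i) w"
  have x: "?x \<in> words (length eps) l" using map_skip_words[OF w] length_eps by simp
  have u': "u \<in> tens_space (length eps) l" using u length_eps by simp
  have w': "w \<in> words (length eps') l" using w length_eps' by simp
  have len: "length w = l" using words_length[OF w] .
  have "ee (tensrep eps l) (skip i j) u ?x = (\<Sum>p<l. if ?x ! p = skip i j
      then (\<Prod>r<p. inverse (k_diag eps (skip i j) (?x ! r))) * u (?x[p := Suc (skip i j)]) else 0)"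
    by (simp only: tensrep_ee[OF u'] x if_True)
  also have "\<dots> = (\<Sum>p<l. if w ! p = j
      then (\<Prod>r<p. inverse (k_diag eps' j (w ! r))) * relabel_tens l u (w[p := Suc j]) else 0)"
  proof (rule sum.cong[OF refl])
    fix p assume "p \<in> {..<l}"
    moreover have "(\<Prod>r<p. inverse (k_diag eps (skip i j) (?x ! r))) = (\<Prod>r<p. inverse (k_diag eps' j (w ! r)))"
      if "p < l" using that len k_diag_remove_entry[OF j] by (intro prod.cong) auto
    moreover have "relabel_tens l u (w[p := Suc j]) = u (?x[p := Suc (skip i j)])"
      using relabel_tens_update[OF w, of "Suc j"] j skip_Suc[OF j(2)] by auto
    ultimately show "(if ?x ! p = skip i j
        then (\<Prod>r<p. inverse (k_diag eps (skip i j) (?x ! r))) * u (?x[p := Suc (skip i j)]) else 0)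
      = (if w ! p = j then (\<Prod>r<p. inverse (k_diag eps' j (w ! r))) * relabel_tens l u (w[p := Suc j]) else 0)"
      using len by simp
  qed
  also have "\<dots> = ee (tensrep eps' l) j (relabel_tens l u) w"
    by (simp only: tensrep_ee[OF relabel_tens_space] w' if_True)
  finally show "ee (tensrep eps l) (skip i j) u ?x = ee (tensrep eps' l) j (relabel_tens l u) w" .
qed

lemma relabel_tens_ff:
  assumes u: "u \<in> tens_space n l" and j: "j \<in> {1..n - 2}" "Suc j \<noteq> i"
  shows "relabel_tens l (ff (tensrep eps l) (skip i j) u) = ff (tensrep eps' l) j (relabel_tens l u)"
proof (rule relabel_tens_eqI)
  show "ff (tensrep eps' l) j (relabel_tens l u) \<in> tens_space (n - 1) l"
    using tensrep_closed(3)[of eps' l] length_eps' by simp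
  fix w assume w: "w \<in> words (n - 1) l"
  let ?x = "map (skip i) w"
  have x: "?x \<in> words (length eps) l" using map_skip_words[OF w] length_eps by simp
  have u': "u \<in> tens_space (length eps) l" using u length_eps by simp
  have w': "w \<in> words (length eps') l" using w length_eps' by simp
  have len: "length w = l" using words_length[OF w] .
  have "ff (tensrep eps l) (skip i j) u ?x = (\<Sum>p<l. if ?x ! p = Suc (skip i j)
      then (\<Prod>r\<in>{p<..<l}. k_diag eps (skip i j) (?x ! r)) * u (?x[p := skip i j]) else 0)"
    by (simp only: tensrep_ff[OF u'] x if_True)
  also have "\<dots> = (\<Sum>p<l. if w ! p = Suc j
      then (\<Prod>r\<in>{p<..<l}. k_diag eps' j (w ! r)) * relabel_tens l u (w[p := j]) else 0)"
  proof (rule sum.cong[OF refl])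
    fix p assume "p \<in> {..<l}"
    moreover have "(\<Prod>r\<in>{p<..<l}. k_diag eps (skip i j) (?x ! r)) = (\<Prod>r\<in>{p<..<l}. k_diag eps' j (w ! r))"
      using len k_diag_remove_entry[OF j] by (intro prod.cong) auto
    moreover have "relabel_tens l u (w[p := j]) = u (?x[p := skip i j])"
      using relabel_tens_update[OF w, of j] j by auto
    moreover have "skip i (w ! p) = Suc (skip i j) \<longleftrightarrow> w ! p = Suc j"
      using skip_Suc[OF j(2)] by (metis skip_eq_iff)
    ultimately show "(if ?x ! p = Suc (skip i j)
        then (\<Prod>r\<in>{p<..<l}. k_diag eps (skip i j) (?x ! r)) * u (?x[p := skip i j]) else 0)
      = (if w ! p = Suc j then (\<Prod>r\<in>{p<..<l}. k_diag eps' j (w ! r)) * relabel_tens l u (w[p := j]) else 0)"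
      using len by simp
  qed
  also have "\<dots> = ff (tensrep eps' l) j (relabel_tens l u) w"
    by (simp only: tensrep_ff[OF relabel_tens_space] w' if_True)
  finally show "ff (tensrep eps l) (skip i j) u ?x = ff (tensrep eps' l) j (relabel_tens l u) w" .
qed

lemma relabel_tens_ee_ee:
  assumes u: "u \<in> tens_space n l" and i2: "i \<in> {2..n - 1}" and w: "w \<in> words (n - 1) l"
  shows "ee (tensrep eps l) (i - 1) (ee (tensrep eps l) i u) (map (skip i) w)
    = ee (tensrep eps' l) (i - 1) (relabel_tens l u) w"
proof -
  let ?x = "map (skip i) w"
  have Suc_pred: "Suc (i - 1) = i" using i2 by simp
  have x: "?x \<in> words (length eps) l" using map_skip_words[OF w] length_eps by simp
  have u': "u \<in> tens_space (length eps) l" using u length_eps by simp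
  have w': "w \<in> words (length eps') l" using w length_eps' by simp
  have len: "length w = l" using words_length[OF w] .
  have "ee (tensrep eps l) (i - 1) (ee (tensrep eps l) i u) ?x = (\<Sum>p<l. if ?x ! p = i - 1
      then (\<Prod>r<p. inverse (k_diag eps (i - 1) (?x ! r) * k_diag eps i (?x ! r))) * u (?x[p := Suc i]) else 0)"
    by (rule tensrep_ee_ee[OF u' x, of "i - 1", unfolded Suc_pred])
      (use skip_notin_map i2 length_eps in auto)
  also have "\<dots> = (\<Sum>p<l. if w ! p = i - 1
      then (\<Prod>r<p. inverse (k_diag eps' (i - 1) (w ! r))) * relabel_tens l u (w[p := i]) else 0)"
  proof (rule sum.cong[OF refl])
    fix p assume "p \<in> {..<l}"
    moreover have "(\<Prod>r<p. inverse (k_diag eps (i - 1) (?x ! r) * k_diag eps i (?x ! r)))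
        = (\<Prod>r<p. inverse (k_diag eps' (i - 1) (w ! r)))" if "p < l"
      using that len k_diag_remove_entry_merged[OF i2] by (intro prod.cong) auto
    moreover have "relabel_tens l u (w[p := i]) = u (?x[p := Suc i])"
      using relabel_tens_update[OF w, of i] i2 skip_self[of i] by auto
    moreover have "skip i (w ! p) = i - 1 \<longleftrightarrow> w ! p = i - 1"
      using i2 skip_pred[of i] by (metis skip_eq_iff atLeastAtMost_iff le_trans one_le_numeral)
    ultimately show "(if ?x ! p = i - 1
        then (\<Prod>r<p. inverse (k_diag eps (i - 1) (?x ! r) * k_diag eps i (?x ! r))) * u (?x[p := Suc i]) else 0)
      = (if w ! p = i - 1 then (\<Prod>r<p. inverse (k_diag eps' (i - 1) (w ! r))) * relabel_tens l u (w[p := i]) else 0)"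
      using len by simp
  qed
  also have "\<dots> = ee (tensrep eps' l) (i - 1) (relabel_tens l u) w"
    by (simp only: tensrep_ee[OF relabel_tens_space] w' if_True Suc_pred)
  finally show ?thesis .
qed

lemma relabel_tens_ff_ff:
  assumes u: "u \<in> tens_space n l" and i2: "i \<in> {2..n - 1}" and w: "w \<in> words (n - 1) l"
  shows "ff (tensrep eps l) i (ff (tensrep eps l) (i - 1) u) (map (skip i) w)
    = ff (tensrep eps' l) (i - 1) (relabel_tens l u) w"
proof -
  let ?x = "map (skip i) w"
  have Suc_pred: "Suc (i - 1) = i" using i2 by simp
  have x: "?x \<in> words (length eps) l" using map_skip_words[OF w] length_eps by simp
  have u': "u \<in> tens_space (length eps) l" using u length_eps by simp
  have w': "w \<in> words (length eps') l" using w length_eps' by simp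
  have len: "length w = l" using words_length[OF w] .
  have "ff (tensrep eps l) i (ff (tensrep eps l) (i - 1) u) ?x = (\<Sum>p<l. if ?x ! p = Suc i
      then (\<Prod>r\<in>{p<..<l}. k_diag eps i (?x ! r) * k_diag eps (i - 1) (?x ! r)) * u (?x[p := i - 1]) else 0)"
    by (rule tensrep_ff_ff[OF u' x, of "i - 1", unfolded Suc_pred])
      (use skip_notin_map i2 length_eps in auto)
  also have "\<dots> = (\<Sum>p<l. if w ! p = i
      then (\<Prod>r\<in>{p<..<l}. k_diag eps' (i - 1) (w ! r)) * relabel_tens l u (w[p := i - 1]) else 0)"
  proof (rule sum.cong[OF refl])
    fix p assume "p \<in> {..<l}"
    moreover have "(\<Prod>r\<in>{p<..<l}. k_diag eps i (?x ! r) * k_diag eps (i - 1) (?x ! r))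
        = (\<Prod>r\<in>{p<..<l}. k_diag eps' (i - 1) (w ! r))"
      using len k_diag_remove_entry_merged[OF i2] by (intro prod.cong) (auto simp: mult.commute)
    moreover have "i - 1 \<in> {1..n - 1}" using i2 by auto
    then have "relabel_tens l u (w[p := i - 1]) = u (?x[p := i - 1])"
      using relabel_tens_update[OF w] i2 skip_pred[of i] by simp
    moreover have "skip i (w ! p) = Suc i \<longleftrightarrow> w ! p = i"
      by (metis skip_eq_iff skip_self)
    ultimately show "(if ?x ! p = Suc i
        then (\<Prod>r\<in>{p<..<l}. k_diag eps i (?x ! r) * k_diag eps (i - 1) (?x ! r)) * u (?x[p := i - 1]) else 0)
      = (if w ! p = i then (\<Prod>r\<in>{p<..<l}. k_diag eps' (i - 1) (w ! r)) * relabel_tens l u (w[p := i - 1]) else 0)"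
      using len by simp
  qed
  also have "\<dots> = ff (tensrep eps' l) (i - 1) (relabel_tens l u) w"
    by (simp only: tensrep_ff[OF relabel_tens_space] w' if_True Suc_pred)
  finally show ?thesis .
qed

lemma relabel_tens_ee_merged:
  assumes u: "u \<in> tens_space n l" and i2: "i \<in> {2..n - 1}"
  shows "relabel_tens l (ee (phi_rep eps i (tensrep eps l)) (i - 1) u)
    = ee (tensrep eps' l) (i - 1) (relabel_tens l u)"
proof -
  let ?R = "tensrep eps l"
  have "relabel_tens l (\<lambda>x. ee ?R (i - 1) (ee ?R i u) x - D_const eps i * ee ?R i (ee ?R (i - 1) u) x)
      = ee (tensrep eps' l) (i - 1) (relabel_tens l u)"
  proof (rule relabel_tens_eqI)
    show "ee (tensrep eps' l) (i - 1) (relabel_tens l u) \<in> tens_space (n - 1) l"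
      using tensrep_closed(2)[of eps' l] length_eps' by simp
    fix w assume w: "w \<in> words (n - 1) l"
    have "ee ?R i (ee ?R (i - 1) u) (map (skip i) w) = 0"
      by (rule tensrep_ee_vanish[OF tensrep_closed(2) skip_notin_map])
    then show "ee ?R (i - 1) (ee ?R i u) (map (skip i) w) - D_const eps i * ee ?R i (ee ?R (i - 1) u) (map (skip i) w)
        = ee (tensrep eps' l) (i - 1) (relabel_tens l u) w"
      using relabel_tens_ee_ee[OF u i2 w] by simp
  qed
  moreover have "i \<in> {2..length eps - 1}" using i2 length_eps by simp
  ultimately show ?thesis by (simp only: phi_rep_merged(1))
qed

lemma relabel_tens_ff_merged:
  assumes u: "u \<in> tens_space n l" and i2: "i \<in> {2..n - 1}"
  shows "relabel_tens l (ff (phi_rep eps i (tensrep eps l)) (i - 1) u)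
    = ff (tensrep eps' l) (i - 1) (relabel_tens l u)"
proof -
  let ?R = "tensrep eps l"
  have "relabel_tens l (\<lambda>x. ff ?R i (ff ?R (i - 1) u) x - inverse (D_const eps i) * ff ?R (i - 1) (ff ?R i u) x)
      = ff (tensrep eps' l) (i - 1) (relabel_tens l u)"
  proof (rule relabel_tens_eqI)
    show "ff (tensrep eps' l) (i - 1) (relabel_tens l u) \<in> tens_space (n - 1) l"
      using tensrep_closed(3)[of eps' l] length_eps' by simp
    fix w assume w: "w \<in> words (n - 1) l"
    have "Suc (i - 1) \<notin> set (map (skip i) w)" using i2 skip_notin_map by simp
    then have "ff ?R (i - 1) (ff ?R i u) (map (skip i) w) = 0"
      by (rule tensrep_ff_vanish[OF tensrep_closed(3)])
    then show "ff ?R i (ff ?R (i - 1) u) (map (skip i) w)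
        - inverse (D_const eps i) * ff ?R (i - 1) (ff ?R i u) (map (skip i) w)
        = ff (tensrep eps' l) (i - 1) (relabel_tens l u) w"
      using relabel_tens_ff_ff[OF u i2 w] by simp
  qed
  moreover have "i \<in> {2..length eps - 1}" using i2 length_eps by simp
  ultimately show ?thesis by (simp only: phi_rep_merged(2))
qed

lemma tensrep_iso: "rep_iso (n - 1) (phi_rep eps i (tensrep eps l)) (tensrep eps' l)"
proof (rule rep_iso_phi_repI[OF relabel_tens_bij])
  show "relabel_tens l (\<lambda>x. a * u x + b * v x) = (\<lambda>y. a * relabel_tens l u y + b * relabel_tens l v y)"
    for u v a b unfolding relabel_tens_def by auto
qed (rule relabel_tens_om relabel_tens_ee relabel_tens_ff relabel_tens_ee_merged relabel_tens_ff_merged;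
    use trunc_tensrep_eq in auto)+

end

theorem lemma4p4:
  fixes eps :: "nat list" and n i :: nat
  assumes "n \<ge> 4" and "length eps = n" and "valid_eps eps"
    and "i \<in> {1..n}"
    and "n = 4 \<longrightarrow> homogeneous (remove_entry eps i)"
  shows "stable (n - 1) (phi_rep eps i (natrep eps))
       \<and> rep_iso (n - 1) (phi_rep eps i (natrep eps)) (natrep (remove_entry eps i))
       \<and> (\<forall>l \<ge> 1. rep_iso (n - 1) (phi_rep eps i (tensrep eps l))
                                   (tensrep (remove_entry eps i) l))"
proof -
  interpret entry_removal eps n i
    using assms(2,4) by unfold_locales
  show ?thesis using natrep_stable natrep_iso tensrep_iso by blast
qed

end
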